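(* Let $n\ge1$, $s\in[\frac12,1)$, and let $K:\mathbb{R}^n\times\mathbb{R}^n\to[0,+\infty]$ be measurable with $\frac{c\,\chi_{[0,\varrho)}(|x-z|)}{|x-z|^{n+2s}}\le K(x,z)\le\frac{C}{|x-z|^{n+2s}}$ for some $c,C\in(0,+\infty)$, $\varrho\in(0,+\infty]$, and assume $$C_\sharp:=\sup_{x\in\mathbb{R}^n}\int_{B_1}|y|\,|K(x,x+y)-K(x,x-y)|\,dy<+\infty .$$ Then for every $u\in C^\infty_c(\mathbb{R}^n)$ and every $x\in\mathbb{R}^n$ the limit $$\mathcal L_Ku(x)=\lim_{\varepsilon\searrow0}\int_{\mathbb{R}^n\setminus B_\varepsilon}(u(x)-u(x-y))K(x,x-y)\,dy$$ exists, and $$\|\mathcal L_Ku\|_{L^\infty(\mathbb{R}^n)}\le C_n\|u\|_{C^2(\mathbb{R}^n)}\left(\frac{C}{s(1-s)}+C_\sharp\right),$$ where $C_n>0$ depends only on $n$.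
   Context: $B_r$ is the open ball of radius $r$ centered at $0$; $\chi_{[0,\varrho)}$ is the indicator of $[0,\varrho)$. *)

theory Defs
  imports "HOL-Analysis.Analysis"
begin

definition partial_deriv :: "'n::finite \<Rightarrow> (real^'n \<Rightarrow> real) \<Rightarrow> real^'n \<Rightarrow> real" where
  "partial_deriv i f x = deriv (\<lambda>t. f (x + t *\<^sub>R axis i 1)) 0"

fun dparts :: "'n::finite list \<Rightarrow> (real^'n \<Rightarrow> real) \<Rightarrow> real^'n \<Rightarrow> real" where
  "dparts [] f = f"
| "dparts (i # is) f = partial_deriv i (dparts is f)"

definition smooth :: "(real^'n::finite \<Rightarrow> real) \<Rightarrow> bool" where
  "smooth f \<longleftrightarrow> (\<forall>is. continuous_on UNIV (dparts is f) \<and>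
      (\<forall>i x. (\<lambda>t. dparts is f (x + t *\<^sub>R axis i 1)) differentiable (at 0)))"

definition smooth_compact_support :: "(real^'n::finite \<Rightarrow> real) \<Rightarrow> bool" where
  "smooth_compact_support u \<longleftrightarrow> smooth u \<and> compact (closure {x. u x \<noteq> 0})"

definition C2_norm :: "(real^'n::finite \<Rightarrow> real) \<Rightarrow> real" where
  "C2_norm u = (SUP x. \<bar>u x\<bar>) + (\<Sum>i\<in>UNIV. SUP x. \<bar>partial_deriv i u x\<bar>)
     + (\<Sum>i\<in>UNIV. \<Sum>j\<in>UNIV. SUP x. \<bar>partial_deriv i (partial_deriv j u) x\<bar>)"

definition C_sharp :: "(real^'n::finite \<Rightarrow> real^'n \<Rightarrow> ennreal) \<Rightarrow> ennreal" where
  "C_sharp K = (SUP x. \<integral>\<^sup>+ y \<in> ball 0 1. ennreal (norm y *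
       \<bar>enn2real (K x (x + y)) - enn2real (K x (x - y))\<bar>) \<partial>lborel)"

definition trunc_op :: "(real^'n::finite \<Rightarrow> real^'n \<Rightarrow> ennreal) \<Rightarrow> (real^'n \<Rightarrow> real) \<Rightarrow> real^'n \<Rightarrow> real \<Rightarrow> real" where
  "trunc_op K u x \<epsilon> = (LINT y : - ball 0 \<epsilon> | lborel. (u x - u (x - y)) * enn2real (K x (x - y)))"

end

(*
  Fix x and write v y = u x - u (x - y), k y = K x (x - y) and g y for the first-order Taylor
  polynomial of v, which is linear and hence odd.  Away from the origin |v k| <= 2 |u|_inf C |y|^(-n-2s)
  is integrable.  Near the origin the remainder satisfies |(v - g) k| <= n^2 |D^2 u|_inf C |y|^(2-n-2s),
  which is integrable because 2s < 2; and since g is odd, on each symmetric annulus eps <= |y| < 1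
  the integral of g k equals that of g (k y - k (-y)) / 2, which is dominated by
  |Du|_inf |y| |k y - k (-y)|, whose integral over B_1 is at most C_sharp.  Dominated convergence
  gives the limit as eps -> 0.  Summing over dyadic annuli bounds the radial integrals by 2 V outside
  B_1 (as s >= 1/2) and by V / (1 - s) inside, where V = 2^n |B_1|.  Since smoothness only
  provides partial derivatives along coordinate lines, the Taylor estimate is proved by moving
  from x to x - y one coordinate at a time.
*)

theory Submission
  imports Defs
begin

section \<open>Set integrals and punctured balls\<close>

lemma set_integrable_nn_integral_le:
  fixes f :: "'a \<Rightarrow> real"
  assumes f: "f \<in> borel_measurable M" "A \<in> sets M" "\<And>x. x \<in> A \<Longrightarrow> 0 \<le> f x"
    and le: "(\<integral>\<^sup>+x\<in>A. ennreal (f x) \<partial>M) \<le> ennreal B" and B: "0 \<le> B"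
  shows "set_integrable M A f" "(LINT x:A|M. f x) \<le> B"
proof -
  have eq: "(\<integral>\<^sup>+x. ennreal (indicator A x * f x) \<partial>M) = (\<integral>\<^sup>+x\<in>A. ennreal (f x) \<partial>M)"
    by (intro nn_integral_cong) (auto simp: indicator_def)
  show int: "set_integrable M A f"
    unfolding set_integrable_def using f le eq
    by (intro integrableI_nonneg) (auto simp: indicator_def intro: le_less_trans)
  have "(LINT x:A|M. f x) = (\<integral>x. indicator A x * f x \<partial>M)"
    unfolding set_lebesgue_integral_def by simp
  also have "\<dots> = enn2real (\<integral>\<^sup>+x. ennreal (indicator A x * f x) \<partial>M)"
    using f int by (intro integral_eq_nn_integral) (auto simp: indicator_def set_integrable_def)
  finally show "(LINT x:A|M. f x) \<le> B"
    using le eq B by (simp add: enn2real_leI)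
qed

lemma set_integrable_abs_le:
  fixes f w :: "'a \<Rightarrow> real"
  assumes w: "set_integrable M A w" and f: "f \<in> borel_measurable M" "A \<in> sets M"
    and le: "\<And>x. x \<in> A \<Longrightarrow> \<bar>f x\<bar> \<le> w x"
  shows "set_integrable M A f" "\<bar>LINT x:A|M. f x\<bar> \<le> (LINT x:A|M. w x)"
proof -
  show int: "set_integrable M A f"
    using f le by (intro set_integrable_bound[OF w] AE_I2)
      (auto simp: set_borel_measurable_def intro: order_trans[OF _ abs_ge_self])
  have "\<bar>LINT x:A|M. f x\<bar> \<le> (LINT x:A|M. \<bar>f x\<bar>)"
    using set_integral_norm_bound[OF int] by simp
  also have "\<dots> \<le> (LINT x:A|M. w x)"
    using int w le by (intro set_integral_mono set_integrable_abs)
  finally show "\<bar>LINT x:A|M. f x\<bar> \<le> (LINT x:A|M. w x)" .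
qed

lemma distr_lborel_uminus: "distr lborel borel uminus = (lborel :: 'a::euclidean_space measure)"
  using lborel_affine[of "-1" "0::'a"] by (simp add: density_1)

lemma set_integral_odd_mult:
  fixes g k :: "'a::euclidean_space \<Rightarrow> real"
  assumes A: "A \<in> sets lborel" "\<And>y. - y \<in> A \<longleftrightarrow> y \<in> A" and g_odd: "\<And>y. g (- y) = - g y"
    and int: "set_integrable lborel A (\<lambda>y. g y * k y)"
  shows "(LINT y:A|lborel. g y * k y) = (LINT y:A|lborel. g y * (k y - k (- y)) / 2)"
proof -
  define F where "F y = indicator A y * (g y * k y)" for y
  have F: "integrable lborel F"
    using int unfolding F_def set_integrable_def by simp
  then have [measurable]: "F \<in> borel_measurable borel"
    by (simp add: borel_measurable_integrable)
  have F_uminus: "F (- y) = - (indicator A y * (g y * k (- y)))" for y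
    using A(2) g_odd by (simp add: F_def indicator_def)
  have "integrable lborel (\<lambda>y. F (- y))"
    using F integrable_distr_eq[of uminus lborel borel F] by (simp add: distr_lborel_uminus)
  then have int': "set_integrable lborel A (\<lambda>y. g y * k (- y))"
    unfolding set_integrable_def F_uminus by simp
  have "(LINT y:A|lborel. g y * k (- y)) = - integral\<^sup>L lborel (\<lambda>y. F (- y))"
    unfolding set_lebesgue_integral_def F_uminus by simp
  also have "integral\<^sup>L lborel (\<lambda>y. F (- y)) = integral\<^sup>L lborel F"
    using integral_distr[of uminus lborel borel F] by (simp add: distr_lborel_uminus)
  also have "integral\<^sup>L lborel F = (LINT y:A|lborel. g y * k y)"
    unfolding F_def set_lebesgue_integral_def by simp
  finally show ?thesis
    using int int' by (simp add: right_diff_distrib)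
qed

lemma tendsto_set_integral_ball_minus_ball:
  fixes f :: "'a::euclidean_space \<Rightarrow> real"
  assumes int: "set_integrable lborel (ball 0 r) f"
  shows "((\<lambda>\<epsilon>. LINT y:ball 0 r - ball 0 \<epsilon>|lborel. f y) \<longlongrightarrow> (LINT y:ball 0 r|lborel. f y)) (at_right 0)"
proof (rule tendsto_at_right_sequentially[of 0 1])
  fix S :: "nat \<Rightarrow> real"
  assume S: "\<And>n. 0 < S n" "decseq S" "S \<longlonglongrightarrow> 0"
  have union: "(\<Union>n. ball 0 r - ball 0 (S n)) = ball (0::'a) r - {0}"
  proof (intro equalityI subsetI)
    fix y :: 'a
    assume y: "y \<in> ball 0 r - {0}"
    then have "eventually (\<lambda>n. S n < norm y) sequentially"
      using order_tendstoD(2)[OF S(3), of "norm y"] by simp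
    then obtain n where "S n < norm y"
      by (auto simp: eventually_sequentially)
    then have "y \<in> ball 0 r - ball 0 (S n)"
      using y by simp
    then show "y \<in> (\<Union>n. ball 0 r - ball 0 (S n))"
      by blast
  qed (use S(1) in auto)
  have "(\<lambda>n. LINT y:ball 0 r - ball 0 (S n)|lborel. f y) \<longlonglongrightarrow> (LINT y:ball 0 r - {0}|lborel. f y)"
  proof (unfold union[symmetric], intro set_integral_cont_up)
    show "incseq (\<lambda>n. ball 0 r - ball (0::'a) (S n))"
      unfolding incseq_def by (fastforce dest: decseqD[OF S(2)])
  qed (use int in \<open>auto simp: union intro: set_integrable_subset\<close>)
  also have "(LINT y:ball 0 r - {0}|lborel. f y) = (LINT y:ball 0 r|lborel. f y)"
  proof (rule set_integral_cong_set)
    have "set_integrable lborel (ball 0 r - {0}) f"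
      by (rule set_integrable_subset[OF int]) auto
    then show "set_borel_measurable lborel (ball 0 r - {0}) f"
      unfolding set_integrable_def set_borel_measurable_def by (rule borel_measurable_integrable)
    show "set_borel_measurable lborel (ball 0 r) f"
      using int unfolding set_integrable_def set_borel_measurable_def by (rule borel_measurable_integrable)
  qed (use AE_lborel_singleton[of 0] in auto)
  finally show "(\<lambda>n. LINT y:ball 0 r - ball 0 (S n)|lborel. f y) \<longlonglongrightarrow> (LINT y:ball 0 r|lborel. f y)" .
qed simp

section \<open>Integrals of powers of the norm\<close>

lemma nn_integral_annulus_norm_powr_le:
  fixes b \<rho> :: real
  assumes b: "0 \<le> b" and \<rho>: "0 < \<rho>"
  shows "(\<integral>\<^sup>+y\<in>{y::'a::euclidean_space. \<rho> \<le> norm y \<and> norm y \<le> 2 * \<rho>}. ennreal (norm y powr - b) \<partial>lborel)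
    \<le> ennreal (unit_ball_vol DIM('a) * 2 ^ DIM('a) * \<rho> powr (DIM('a) - b))"
proof -
  have "(\<integral>\<^sup>+y\<in>{y::'a. \<rho> \<le> norm y \<and> norm y \<le> 2 * \<rho>}. ennreal (norm y powr - b) \<partial>lborel)
      \<le> (\<integral>\<^sup>+y. ennreal (\<rho> powr - b) * indicator (cball (0::'a) (2 * \<rho>)) y \<partial>lborel)"
  proof (intro nn_integral_mono)
    fix y :: 'a
    have "norm y powr - b \<le> \<rho> powr - b" if "\<rho> \<le> norm y"
      using that b \<rho> by (intro powr_mono2') auto
    then show "ennreal (norm y powr - b) * indicator {y. \<rho> \<le> norm y \<and> norm y \<le> 2 * \<rho>} y
        \<le> ennreal (\<rho> powr - b) * indicator (cball 0 (2 * \<rho>)) y"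
      by (auto simp: indicator_def)
  qed
  also have "\<dots> = ennreal (\<rho> powr - b) * ennreal (unit_ball_vol DIM('a) * (2 * \<rho>) ^ DIM('a))"
    using \<rho> by (simp add: nn_integral_cmult_indicator emeasure_cball)
  also have "\<dots> = ennreal (unit_ball_vol DIM('a) * 2 ^ DIM('a) * \<rho> powr (DIM('a) - b))"
    using \<rho> by (simp add: ennreal_mult'[symmetric] powr_diff powr_minus powr_realpow power_mult_distrib
        divide_simps mult_ac)
  finally show ?thesis .
qed

lemma nn_integral_norm_powr_dyadic_le:
  fixes b c q :: real and \<rho> :: "nat \<Rightarrow> real" and S :: "'a::euclidean_space set"
  assumes b: "0 \<le> b" and q: "0 \<le> q" "q < 1" and \<rho>: "\<And>k. 0 < \<rho> k"
    and \<rho>_powr: "\<And>k. \<rho> k powr (DIM('a) - b) \<le> c * q ^ k"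
    and cover: "\<And>y. y \<in> S \<Longrightarrow> y \<noteq> 0 \<Longrightarrow> \<exists>k. \<rho> k \<le> norm y \<and> norm y \<le> 2 * \<rho> k"
  shows "(\<integral>\<^sup>+y\<in>S. ennreal (norm y powr - b) \<partial>lborel)
    \<le> ennreal (unit_ball_vol DIM('a) * 2 ^ DIM('a) * c / (1 - q))"
proof -
  define A where "A k = {y::'a. \<rho> k \<le> norm y \<and> norm y \<le> 2 * \<rho> k}" for k
  define V where "V = unit_ball_vol DIM('a) * 2 ^ DIM('a)"
  have "0 \<le> V" unfolding V_def by simp
  have "0 < \<rho> 0 powr (DIM('a) - b)" using \<rho>[of 0] by simp
  moreover have "\<rho> 0 powr (DIM('a) - b) \<le> c" using \<rho>_powr[of 0] by simp
  ultimately have "0 \<le> c" by linarith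
  have "(\<integral>\<^sup>+y\<in>S. ennreal (norm y powr - b) \<partial>lborel)
      \<le> (\<integral>\<^sup>+y. (\<Sum>k. ennreal (norm y powr - b) * indicator (A k) y) \<partial>lborel)"
  proof (intro nn_integral_mono)
    have le_suminf: "f k \<le> suminf f" for f :: "nat \<Rightarrow> ennreal" and k
      using sum_le_suminf[OF summableI, of "{k}" f] by simp
    fix y :: 'a
    show "ennreal (norm y powr - b) * indicator S y \<le> (\<Sum>k. ennreal (norm y powr - b) * indicator (A k) y)"
    proof (cases "y \<in> S \<and> y \<noteq> 0")
      case True
      then obtain k where "y \<in> A k" using cover unfolding A_def by blast
      then have "ennreal (norm y powr - b) * indicator S y = ennreal (norm y powr - b) * indicator (A k) y"
        using True by simp
      also have "\<dots> \<le> (\<Sum>k. ennreal (norm y powr - b) * indicator (A k) y)"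
        by (rule le_suminf)
      finally show ?thesis .
    qed (auto simp: indicator_def)
  qed
  also have "\<dots> = (\<Sum>k. \<integral>\<^sup>+y\<in>A k. ennreal (norm y powr - b) \<partial>lborel)"
    unfolding A_def by (intro nn_integral_suminf) measurable
  also have "\<dots> \<le> (\<Sum>k. ennreal (V * c * q ^ k))"
  proof (intro suminf_le summableI)
    fix k
    have "(\<integral>\<^sup>+y\<in>A k. ennreal (norm y powr - b) \<partial>lborel) \<le> ennreal (V * \<rho> k powr (DIM('a) - b))"
      unfolding A_def V_def using nn_integral_annulus_norm_powr_le[OF b \<rho>, where 'a='a] by simp
    also have "\<dots> \<le> ennreal (V * c * q ^ k)"
      using \<rho>_powr[of k] \<open>0 \<le> V\<close> by (simp add: ennreal_leI mult_left_mono mult.assoc)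
    finally show "(\<integral>\<^sup>+y\<in>A k. ennreal (norm y powr - b) \<partial>lborel) \<le> ennreal (V * c * q ^ k)" .
  qed
  also have "\<dots> = ennreal (V * c / (1 - q))"
    using q \<open>0 \<le> V\<close> \<open>0 \<le> c\<close> by (simp add: suminf_ennreal2 summable_mult summable_geometric
        suminf_mult suminf_geometric)
  finally show ?thesis unfolding V_def .
qed

lemma dyadic_shell_exists:
  fixes r :: real
  assumes "0 < r"
  obtains k :: int where "2 powr k \<le> r" "r < 2 powr (k + 1)"
proof
  show "2 powr \<lfloor>log 2 r\<rfloor> \<le> r"
    using assms powr_mono[OF of_int_floor_le[of "log 2 r"], of 2] by simp
  show "r < 2 powr (\<lfloor>log 2 r\<rfloor> + 1)"
    using assms powr_less_mono[OF real_of_int_floor_add_one_gt[of "log 2 r"], of 2] by simp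
qed

lemma set_integrable_norm_powr_ball:
  fixes b R :: real
  assumes b: "0 \<le> b" "b < DIM('a)" and R: "0 < R"
  shows "set_integrable lborel (ball (0::'a::euclidean_space) R) (\<lambda>y. norm y powr - b)"
    and "(LINT y:ball (0::'a) R|lborel. norm y powr - b)
      \<le> unit_ball_vol DIM('a) * 2 ^ DIM('a) * R powr (DIM('a) - b) / (2 powr (DIM('a) - b) - 1)"
proof -
  define q where "q = 2 powr (b - DIM('a))"
  have q: "0 < q" "q < 1"
    using b by (auto simp: q_def powr_less_one)
  have "(\<integral>\<^sup>+y\<in>ball (0::'a) R. ennreal (norm y powr - b) \<partial>lborel)
      \<le> ennreal (unit_ball_vol DIM('a) * 2 ^ DIM('a) * (R powr (DIM('a) - b) * q) / (1 - q))"
  proof (rule nn_integral_norm_powr_dyadic_le[where \<rho>="\<lambda>j. R * 2 powr - real (j + 1)"])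
    fix j :: nat
    have "(R * 2 powr - real (j + 1)) powr (DIM('a) - b) = R powr (DIM('a) - b) * q powr (j + 1)"
      using R by (simp add: q_def powr_mult powr_powr algebra_simps)
    then show "(R * 2 powr - real (j + 1)) powr (DIM('a) - b) \<le> R powr (DIM('a) - b) * q * q ^ j"
      using q powr_realpow[of q "j + 1"] by simp
  next
    fix y :: 'a
    assume y: "y \<in> ball 0 R" "y \<noteq> 0"
    then obtain k :: int where k: "2 powr k \<le> norm y / R" "norm y / R < 2 powr (k + 1)"
      using R dyadic_shell_exists[of "norm y / R"] by auto
    have "norm y / R < 1"
      using y R by simp
    then have "2 powr k < 1"
      using k(1) by simp
    then have "k < 0"
      using powr_less_cancel_iff[of 2 k 0] by simp
    then have "real (nat (- k - 1) + 1) = - k" by simp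
    then show "\<exists>j. R * 2 powr - real (j + 1) \<le> norm y \<and> norm y \<le> 2 * (R * 2 powr - real (j + 1))"
      using k R by (intro exI[of _ "nat (- k - 1)"]) (auto simp: field_simps powr_add)
  qed (use b R q in auto)
  also have "unit_ball_vol DIM('a) * 2 ^ DIM('a) * (R powr (DIM('a) - b) * q) / (1 - q)
      = unit_ball_vol DIM('a) * 2 ^ DIM('a) * R powr (DIM('a) - b) / (2 powr (DIM('a) - b) - 1)"
    using q by (simp add: q_def powr_minus_divide[symmetric] powr_diff field_simps)
  finally have le: "(\<integral>\<^sup>+y\<in>ball (0::'a) R. ennreal (norm y powr - b) \<partial>lborel)
      \<le> ennreal (unit_ball_vol DIM('a) * 2 ^ DIM('a) * R powr (DIM('a) - b) / (2 powr (DIM('a) - b) - 1))" .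
  have "1 < 2 powr (DIM('a) - b)"
    using b by (intro gr_one_powr) auto
  then have "0 \<le> unit_ball_vol DIM('a) * 2 ^ DIM('a) * R powr (DIM('a) - b) / (2 powr (DIM('a) - b) - 1)"
    by simp
  then show "set_integrable lborel (ball (0::'a) R) (\<lambda>y. norm y powr - b)"
    and "(LINT y:ball (0::'a) R|lborel. norm y powr - b)
      \<le> unit_ball_vol DIM('a) * 2 ^ DIM('a) * R powr (DIM('a) - b) / (2 powr (DIM('a) - b) - 1)"
    using set_integrable_nn_integral_le[OF _ _ _ le] by auto
qed

lemma set_integrable_norm_powr_outside_ball:
  fixes a R :: real
  assumes a: "DIM('a) < a" and R: "0 < R"
  shows "set_integrable lborel (- ball (0::'a::euclidean_space) R) (\<lambda>y. norm y powr - a)"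
    and "(LINT y:- ball (0::'a) R|lborel. norm y powr - a)
      \<le> unit_ball_vol DIM('a) * 2 ^ DIM('a) * R powr (DIM('a) - a) / (1 - 2 powr (DIM('a) - a))"
proof -
  define q where "q = 2 powr (DIM('a) - a)"
  have q: "0 < q" "q < 1"
    using a by (auto simp: q_def powr_less_one)
  have le: "(\<integral>\<^sup>+y\<in>- ball (0::'a) R. ennreal (norm y powr - a) \<partial>lborel)
      \<le> ennreal (unit_ball_vol DIM('a) * 2 ^ DIM('a) * R powr (DIM('a) - a) / (1 - q))"
  proof (rule nn_integral_norm_powr_dyadic_le[where \<rho>="\<lambda>j. R * 2 powr real j"])
    fix j :: nat
    show "(R * 2 powr real j) powr (DIM('a) - a) \<le> R powr (DIM('a) - a) * q ^ j"
      using R q by (simp add: q_def powr_mult powr_powr powr_realpow[symmetric] mult.commute)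
  next
    fix y :: 'a
    assume y: "y \<in> - ball 0 R" "y \<noteq> 0"
    then obtain k :: int where k: "2 powr k \<le> norm y / R" "norm y / R < 2 powr (k + 1)"
      using R dyadic_shell_exists[of "norm y / R"] by auto
    have "1 \<le> norm y / R"
      using y R by simp
    then have "2 powr 0 < 2 powr (k + 1)"
      using k(2) by simp
    then have "0 \<le> k"
      using powr_less_cancel_iff[of 2 0 "k + 1"] by simp
    then show "\<exists>j. R * 2 powr real j \<le> norm y \<and> norm y \<le> 2 * (R * 2 powr real j)"
      using k R by (intro exI[of _ "nat k"]) (auto simp: field_simps powr_add)
  qed (use a R q in auto)
  have "0 \<le> unit_ball_vol DIM('a) * 2 ^ DIM('a) * R powr (DIM('a) - a) / (1 - q)"
    using q by simp
  then show "set_integrable lborel (- ball (0::'a) R) (\<lambda>y. norm y powr - a)"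
    and "(LINT y:- ball (0::'a) R|lborel. norm y powr - a)
      \<le> unit_ball_vol DIM('a) * 2 ^ DIM('a) * R powr (DIM('a) - a) / (1 - 2 powr (DIM('a) - a))"
    using set_integrable_nn_integral_le[OF _ _ _ le] by (auto simp: q_def)
qed

section \<open>Taylor estimates along coordinate axes\<close>

lemma has_real_derivative_partial_deriv:
  fixes f :: "real^'n::finite \<Rightarrow> real"
  assumes "\<And>x. (\<lambda>t. f (x + t *\<^sub>R axis i 1)) differentiable (at 0)"
  shows "((\<lambda>t. f (p + t *\<^sub>R axis i 1)) has_real_derivative partial_deriv i f (p + t *\<^sub>R axis i 1)) (at t)"
proof -
  define q where "q = p + t *\<^sub>R axis i 1"
  have "((\<lambda>\<tau>. f (q + \<tau> *\<^sub>R axis i 1)) has_real_derivative partial_deriv i f q) (at (t + - t))"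
    using assms[of q] by (simp add: partial_deriv_def DERIV_deriv_iff_real_differentiable)
  then have "((\<lambda>\<tau>. f (q + (\<tau> + - t) *\<^sub>R axis i 1)) has_real_derivative partial_deriv i f q) (at t)"
    by (simp only: DERIV_shift)
  then show ?thesis
    by (simp add: q_def algebra_simps)
qed

lemma abs_partial_increment_le:
  fixes f :: "real^'n::finite \<Rightarrow> real"
  assumes d: "\<And>x. (\<lambda>t. f (x + t *\<^sub>R axis i 1)) differentiable (at 0)"
    and b: "\<And>x. \<bar>partial_deriv i f x\<bar> \<le> B"
  shows "\<bar>f (z + t *\<^sub>R axis i 1) - f z\<bar> \<le> B * \<bar>t\<bar>"
  using field_differentiable_bound[of UNIV "\<lambda>t. f (z + t *\<^sub>R axis i 1)"
      "\<lambda>t. partial_deriv i f (z + t *\<^sub>R axis i 1)" B t 0]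
    has_real_derivative_partial_deriv[OF d] b by (simp add: has_field_derivative_at_within)

lemma abs_partial_taylor_le:
  fixes f :: "real^'n::finite \<Rightarrow> real"
  assumes d0: "\<And>x. (\<lambda>t. f (x + t *\<^sub>R axis i 1)) differentiable (at 0)"
    and d1: "\<And>x. (\<lambda>t. partial_deriv i f (x + t *\<^sub>R axis i 1)) differentiable (at 0)"
    and b: "\<And>x. \<bar>partial_deriv i (partial_deriv i f) x\<bar> \<le> B"
  shows "\<bar>f (z + t *\<^sub>R axis i 1) - f z - partial_deriv i f z * t\<bar> \<le> B * t\<^sup>2"
proof -
  define \<psi> where "\<psi> \<tau> = f (z + \<tau> *\<^sub>R axis i 1) - partial_deriv i f z * \<tau>" for \<tau>
  have "(\<psi> has_real_derivative partial_deriv i f (z + \<tau> *\<^sub>R axis i 1) - partial_deriv i f z) (at \<tau>)" for \<tau>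
    unfolding \<psi>_def
    using DERIV_diff[OF has_real_derivative_partial_deriv[OF d0] DERIV_cmult[OF DERIV_ident]] by simp
  moreover have "\<bar>partial_deriv i f (z + \<tau> *\<^sub>R axis i 1) - partial_deriv i f z\<bar> \<le> B * \<bar>t\<bar>"
    if "\<tau> \<in> closed_segment 0 t" for \<tau>
  proof -
    have "\<bar>\<tau>\<bar> \<le> \<bar>t\<bar>"
      using that by (auto simp: closed_segment_eq_real_ivl split: if_splits)
    moreover have "0 \<le> B"
      using b[of z] by linarith
    ultimately show ?thesis
      using abs_partial_increment_le[OF d1 b, of z \<tau>] by (meson mult_left_mono order_trans)
  qed
  ultimately have "norm (\<psi> t - \<psi> 0) \<le> B * \<bar>t\<bar> * norm (t - 0)"
    by (intro field_differentiable_bound[of "closed_segment 0 t" \<psi>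
        "\<lambda>\<tau>. partial_deriv i f (z + \<tau> *\<^sub>R axis i 1) - partial_deriv i f z"])
      (auto intro: has_field_derivative_at_within)
  then show ?thesis
    by (simp add: \<psi>_def power2_eq_square abs_mult_self mult.assoc)
qed

lemma sum_component_scaleR_axis: "(\<Sum>j\<in>UNIV. y $ j *\<^sub>R axis j 1) = (y :: real^'n::finite)"
  by (simp add: vec_eq_iff axis_def if_distrib sum.delta cong: if_cong)

lemma abs_diff_le_partial_deriv_bound:
  fixes f :: "real^'n::finite \<Rightarrow> real"
  assumes d: "\<And>j x. (\<lambda>t. f (x + t *\<^sub>R axis j 1)) differentiable (at 0)"
    and b: "\<And>j x. \<bar>partial_deriv j f x\<bar> \<le> B"
  shows "\<bar>f x - f (x - (\<Sum>j\<in>I. y $ j *\<^sub>R axis j 1))\<bar> \<le> B * card I * norm y"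
proof (induction I rule: infinite_finite_induct)
  case (insert k I)
  define z where "z = x - (\<Sum>j\<in>I. y $ j *\<^sub>R axis j 1)"
  have step: "x - (\<Sum>j\<in>insert k I. y $ j *\<^sub>R axis j 1) = z + (- y $ k) *\<^sub>R axis k 1"
    using insert.hyps by (simp add: z_def algebra_simps)
  have "0 \<le> B"
    using b[of k x] by linarith
  have "\<bar>f z - f (z + (- y $ k) *\<^sub>R axis k 1)\<bar> \<le> B * \<bar>y $ k\<bar>"
    using abs_partial_increment_le[OF d b, of z "- y $ k"] by (simp add: abs_minus_commute)
  also have "\<dots> \<le> B * norm y"
    using \<open>0 \<le> B\<close> component_le_norm_cart[of y k] by (intro mult_left_mono) auto
  finally show ?case
    using insert z_def by (simp add: step algebra_simps)
qed simp_all

lemma abs_diff_sub_linear_le_second_partial_bound: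
  fixes u :: "real^'n::finite \<Rightarrow> real"
  assumes d0: "\<And>j x. (\<lambda>t. u (x + t *\<^sub>R axis j 1)) differentiable (at 0)"
    and d1: "\<And>i j x. (\<lambda>t. partial_deriv i u (x + t *\<^sub>R axis j 1)) differentiable (at 0)"
    and b: "\<And>i j x. \<bar>partial_deriv i (partial_deriv j u) x\<bar> \<le> B"
  shows "\<bar>u x - u (x - (\<Sum>j\<in>I. y $ j *\<^sub>R axis j 1)) - (\<Sum>j\<in>I. partial_deriv j u x * y $ j)\<bar>
    \<le> B * (card I)\<^sup>2 * (norm y)\<^sup>2"
proof (induction I rule: infinite_finite_induct)
  case (insert k I)
  define z where "z = x - (\<Sum>j\<in>I. y $ j *\<^sub>R axis j 1)"
  define c where "c = real (card I)"
  have step: "x - (\<Sum>j\<in>insert k I. y $ j *\<^sub>R axis j 1) = z + (- y $ k) *\<^sub>R axis k 1"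
    using insert.hyps by (simp add: z_def algebra_simps)
  have "0 \<le> B"
    using b[of k k x] by linarith
  have yk: "\<bar>y $ k\<bar> \<le> norm y"
    by (rule component_le_norm_cart)
  have "\<bar>u (z + (- y $ k) *\<^sub>R axis k 1) - u z - partial_deriv k u z * (- y $ k)\<bar> \<le> B * (y $ k)\<^sup>2"
    using abs_partial_taylor_le[OF d0 d1 b, of z "- y $ k"] by simp
  also have "\<dots> \<le> B * (norm y)\<^sup>2"
    using \<open>0 \<le> B\<close> yk by (intro mult_left_mono) (auto simp: abs_le_square_iff[symmetric])
  finally have taylor: "\<bar>u z - u (z + (- y $ k) *\<^sub>R axis k 1) - partial_deriv k u z * y $ k\<bar> \<le> B * (norm y)\<^sup>2"
    by (simp add: abs_minus_commute algebra_simps)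
  have "\<bar>partial_deriv k u x - partial_deriv k u z\<bar> \<le> B * c * norm y"
    unfolding z_def c_def by (rule abs_diff_le_partial_deriv_bound[OF d1 b])
  then have "\<bar>(partial_deriv k u z - partial_deriv k u x) * y $ k\<bar> \<le> (B * c * norm y) * norm y"
    using yk by (simp add: abs_mult abs_minus_commute mult_mono)
  with insert.IH taylor have "\<bar>u x - u (x - (\<Sum>j\<in>insert k I. y $ j *\<^sub>R axis j 1))
      - (\<Sum>j\<in>insert k I. partial_deriv j u x * y $ j)\<bar> \<le> B * (c\<^sup>2 + 1 + c) * (norm y)\<^sup>2"
    using insert.hyps unfolding step z_def c_def
    by (simp add: algebra_simps power2_eq_square abs_le_iff)
  also have "\<dots> \<le> B * (c + 1)\<^sup>2 * (norm y)\<^sup>2"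
    using \<open>0 \<le> B\<close> by (intro mult_right_mono mult_left_mono) (auto simp: power2_eq_square c_def algebra_simps)
  finally show ?case
    using insert.hyps by (simp add: c_def add.commute)
qed simp_all

section \<open>Smooth functions with compact support\<close>

lemma partial_deriv_eq_0_on_open:
  fixes f :: "real^'n::finite \<Rightarrow> real"
  assumes U: "open U" "\<And>x. x \<in> U \<Longrightarrow> f x = 0" and p: "p \<in> U"
  shows "partial_deriv i f p = 0"
proof -
  obtain e where e: "0 < e" "ball p e \<subseteq> U"
    using U(1) p open_contains_ball by blast
  have "((\<lambda>t. f (p + t *\<^sub>R axis i 1)) has_real_derivative 0) (at 0)"
  proof (rule has_field_derivative_transform_within_open[where f="\<lambda>_. 0" and S="ball 0 e"])
    fix t :: real
    assume "t \<in> ball 0 e"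
    then have "p + t *\<^sub>R axis i 1 \<in> ball p e"
      by (simp add: dist_norm)
    then show "0 = f (p + t *\<^sub>R axis i 1)"
      using e U(2) by auto
  qed (use e in auto)
  then show ?thesis
    unfolding partial_deriv_def by (rule DERIV_imp_deriv)
qed

lemma dparts_eq_0_outside_support:
  fixes u :: "real^'n::finite \<Rightarrow> real"
  assumes "x \<notin> closure {x. u x \<noteq> 0}"
  shows "dparts is u x = 0"
  using assms
proof (induction "is" arbitrary: x)
  case Nil
  then show ?case
    using closure_subset[of "{x. u x \<noteq> 0}"] by auto
next
  case (Cons i "is")
  show ?case
    using Cons by (auto intro: partial_deriv_eq_0_on_open[of "- closure {x. u x \<noteq> 0}"])
qed

lemma bdd_above_abs_dparts:
  fixes u :: "real^'n::finite \<Rightarrow> real"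
  assumes "smooth_compact_support u"
  shows "bdd_above (range (\<lambda>x. \<bar>dparts is u x\<bar>))"
proof -
  let ?S = "closure {x. u x \<noteq> 0}"
  have "continuous_on UNIV (dparts is u)" "compact ?S"
    using assms by (auto simp: smooth_compact_support_def smooth_def)
  then obtain M where M: "\<And>x. x \<in> ?S \<Longrightarrow> norm (dparts is u x) \<le> M"
    using compact_imp_bounded[OF compact_continuous_image[of ?S "dparts is u"]]
    by (auto simp: bounded_iff intro: continuous_on_subset)
  show ?thesis
  proof (rule bdd_aboveI[where M="max M 0"])
    fix r
    assume "r \<in> range (\<lambda>x. \<bar>dparts is u x\<bar>)"
    then obtain x where "r = \<bar>dparts is u x\<bar>"
      by auto
    then show "r \<le> max M 0"
      using M[of x] dparts_eq_0_outside_support[of x u "is"] by (cases "x \<in> ?S") auto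
  qed
qed

lemma abs_dparts_le_SUP:
  fixes u :: "real^'n::finite \<Rightarrow> real"
  assumes "smooth_compact_support u"
  shows "\<bar>dparts is u x\<bar> \<le> (SUP z. \<bar>dparts is u z\<bar>)" "0 \<le> (SUP z. \<bar>dparts is u z\<bar>)"
  using cSUP_upper[OF UNIV_I bdd_above_abs_dparts[OF assms]] by (auto intro: order_trans[OF abs_ge_zero])

lemma smooth_compact_support_C2_bounds:
  fixes u :: "real^'n::finite \<Rightarrow> real"
  assumes "smooth_compact_support u"
  obtains M0 D1 D2 where "C2_norm u = M0 + D1 + D2" "0 \<le> M0" "0 \<le> D1" "0 \<le> D2"
    and "\<And>z. \<bar>u z\<bar> \<le> M0"
    and "\<And>x y. \<bar>\<Sum>j\<in>UNIV. partial_deriv j u x * y $ j\<bar> \<le> D1 * norm y"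
    and "\<And>x y. \<bar>u x - u (x - y) - (\<Sum>j\<in>UNIV. partial_deriv j u x * y $ j)\<bar>
      \<le> (real CARD('n))\<^sup>2 * D2 * (norm y)\<^sup>2"
proof
  have sup0: "\<bar>u x\<bar> \<le> (SUP z. \<bar>u z\<bar>)" "0 \<le> (SUP z. \<bar>u z\<bar>)" for x
    using abs_dparts_le_SUP[OF assms, of "[]"] by simp_all
  have sup1: "\<bar>partial_deriv j u x\<bar> \<le> (SUP z. \<bar>partial_deriv j u z\<bar>)"
    "0 \<le> (SUP z. \<bar>partial_deriv j u z\<bar>)" for j x
    using abs_dparts_le_SUP[OF assms, of "[j]"] by simp_all
  have sup2: "\<bar>partial_deriv i (partial_deriv j u) x\<bar> \<le> (SUP z. \<bar>partial_deriv i (partial_deriv j u) z\<bar>)"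
    "0 \<le> (SUP z. \<bar>partial_deriv i (partial_deriv j u) z\<bar>)" for i j x
    using abs_dparts_le_SUP[OF assms, of "[i, j]"] by simp_all
  show "C2_norm u = (SUP x. \<bar>u x\<bar>) + (\<Sum>j\<in>UNIV. SUP x. \<bar>partial_deriv j u x\<bar>)
      + (\<Sum>i\<in>UNIV. \<Sum>j\<in>UNIV. SUP x. \<bar>partial_deriv i (partial_deriv j u) x\<bar>)"
    unfolding C2_norm_def ..
  show "0 \<le> (SUP x. \<bar>u x\<bar>)" "0 \<le> (\<Sum>j\<in>UNIV. SUP x. \<bar>partial_deriv j u x\<bar>)"
    "0 \<le> (\<Sum>i\<in>UNIV. \<Sum>j\<in>UNIV. SUP x. \<bar>partial_deriv i (partial_deriv j u) x\<bar>)"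
    using sup0 sup1 sup2 by (auto intro!: sum_nonneg)
  show "\<bar>u z\<bar> \<le> (SUP x. \<bar>u x\<bar>)" for z
    by (rule sup0)
  show "\<bar>\<Sum>j\<in>UNIV. partial_deriv j u x * y $ j\<bar> \<le> (\<Sum>j\<in>UNIV. SUP x. \<bar>partial_deriv j u x\<bar>) * norm y" for x y
  proof -
    have "\<bar>\<Sum>j\<in>UNIV. partial_deriv j u x * y $ j\<bar> \<le> (\<Sum>j\<in>UNIV. \<bar>partial_deriv j u x\<bar> * \<bar>y $ j\<bar>)"
      by (rule order_trans[OF sum_abs]) (simp add: abs_mult)
    also have "\<dots> \<le> (\<Sum>j\<in>UNIV. (SUP x. \<bar>partial_deriv j u x\<bar>) * norm y)"
      using sup1 by (intro sum_mono mult_mono component_le_norm_cart) auto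
    finally show ?thesis
      by (simp add: sum_distrib_right)
  qed
  have hessian: "\<bar>partial_deriv i (partial_deriv j u) z\<bar>
      \<le> (\<Sum>i\<in>UNIV. \<Sum>j\<in>UNIV. SUP x. \<bar>partial_deriv i (partial_deriv j u) x\<bar>)" for i j z
  proof -
    have "\<bar>partial_deriv i (partial_deriv j u) z\<bar> \<le> (SUP x. \<bar>partial_deriv i (partial_deriv j u) x\<bar>)"
      by (rule sup2)
    also have "\<dots> \<le> (\<Sum>j\<in>UNIV. SUP x. \<bar>partial_deriv i (partial_deriv j u) x\<bar>)"
      using sup2 by (intro member_le_sum) auto
    also have "\<dots> \<le> (\<Sum>i\<in>UNIV. \<Sum>j\<in>UNIV. SUP x. \<bar>partial_deriv i (partial_deriv j u) x\<bar>)"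
      using sup2 by (intro member_le_sum[where f="\<lambda>i. \<Sum>j\<in>UNIV. SUP x. \<bar>partial_deriv i (partial_deriv j u) x\<bar>"]
          sum_nonneg) auto
    finally show ?thesis .
  qed
  have differentiable: "(\<lambda>t. dparts is u (z + t *\<^sub>R axis i 1)) differentiable (at 0)" for "is" i z
    using assms by (auto simp: smooth_compact_support_def smooth_def)
  show "\<bar>u x - u (x - y) - (\<Sum>j\<in>UNIV. partial_deriv j u x * y $ j)\<bar>
      \<le> (real CARD('n))\<^sup>2 * (\<Sum>i\<in>UNIV. \<Sum>j\<in>UNIV. SUP x. \<bar>partial_deriv i (partial_deriv j u) x\<bar>) * (norm y)\<^sup>2"
    for x y
    using abs_diff_sub_linear_le_second_partial_bound[where u=u and x=x and I=UNIV and y=y, OF _ _ hessian]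
      differentiable[of "[]"] differentiable[of "[_]"] by (simp add: sum_component_scaleR_axis mult_ac)
qed

section \<open>Principal values of kernel integrals\<close>

lemma half_le_two_powr_minus_one:
  fixes t :: real
  assumes "0 \<le> t"
  shows "t / 2 \<le> 2 powr t - 1"
proof -
  have "1 / 2 \<le> ln (2::real)"
    using exp_half_le2 ln_le_cancel_iff[of "exp (1/2)" 2] by simp
  then have "t * (1 / 2) \<le> t * ln 2"
    using assms by (rule mult_left_mono)
  then have "t / 2 \<le> t * ln 2"
    by simp
  also have "t * ln 2 + 1 \<le> exp (t * ln 2)"
    by (simp add: exp_ge_add_one_self add.commute)
  then have "t * ln 2 \<le> 2 powr t - 1"
    by (simp add: powr_def mult.commute)
  finally show ?thesis .
qed

lemma tendsto_set_integral_outside_ball: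
  fixes f p :: "'a::euclidean_space \<Rightarrow> real"
  assumes f: "\<And>\<epsilon>. 0 < \<epsilon> \<Longrightarrow> set_integrable lborel (- ball 0 \<epsilon>) f"
    and p: "set_integrable lborel (ball 0 1) p"
    and eq: "\<And>\<epsilon>. 0 < \<epsilon> \<Longrightarrow> \<epsilon> < 1 \<Longrightarrow>
      (LINT y:ball 0 1 - ball 0 \<epsilon>|lborel. f y) = (LINT y:ball 0 1 - ball 0 \<epsilon>|lborel. p y)"
  shows "((\<lambda>\<epsilon>. LINT y:- ball 0 \<epsilon>|lborel. f y)
    \<longlongrightarrow> (LINT y:- ball 0 1|lborel. f y) + (LINT y:ball 0 1|lborel. p y)) (at_right 0)"
proof -
  have split: "(LINT y:- ball 0 \<epsilon>|lborel. f y)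
      = (LINT y:- ball 0 1|lborel. f y) + (LINT y:ball 0 1 - ball 0 \<epsilon>|lborel. p y)"
    if \<epsilon>: "0 < \<epsilon>" "\<epsilon> < 1" for \<epsilon>
  proof -
    have union: "- ball (0::'a) \<epsilon> = - ball 0 1 \<union> (ball 0 1 - ball 0 \<epsilon>)"
      using \<epsilon> by auto
    have "set_integrable lborel (- ball 0 1) f" "set_integrable lborel (ball 0 1 - ball 0 \<epsilon>) f"
      using \<epsilon> by (auto intro: set_integrable_subset[OF f[OF \<epsilon>(1)]])
    then show ?thesis
      unfolding union eq[OF \<epsilon>, symmetric] by (intro set_integral_Un) auto
  qed
  have "eventually (\<lambda>\<epsilon>. \<epsilon> \<in> {0<..<1}) (at_right (0::real))"
    by (rule eventually_at_right_real) simp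
  then have "eventually (\<lambda>\<epsilon>. (LINT y:- ball 0 1|lborel. f y) + (LINT y:ball 0 1 - ball 0 \<epsilon>|lborel. p y)
      = (LINT y:- ball 0 \<epsilon>|lborel. f y)) (at_right 0)"
    by eventually_elim (simp add: split)
  moreover have "((\<lambda>\<epsilon>. (LINT y:- ball 0 1|lborel. f y) + (LINT y:ball 0 1 - ball 0 \<epsilon>|lborel. p y))
      \<longlongrightarrow> (LINT y:- ball 0 1|lborel. f y) + (LINT y:ball 0 1|lborel. p y)) (at_right 0)"
    using tendsto_set_integral_ball_minus_ball[OF p] by (intro tendsto_add tendsto_const)
  ultimately show ?thesis
    by (rule Lim_transform_eventually[rotated])
qed

text \<open>At a fixed point \<open>x\<close>, \<open>v\<close> plays the role of \<open>\<lambda>y. u x - u (x - y)\<close>, \<open>g\<close> of its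
  linearization at \<open>0\<close> and \<open>k\<close> of \<open>\<lambda>y. K x (x - y)\<close>.\<close>

context
  fixes v g k :: "'a::euclidean_space \<Rightarrow> real" and s C M B D S :: real
  assumes s: "1/2 \<le> s" "s < 1"
    and measurable: "v \<in> borel_measurable borel" "g \<in> borel_measurable borel" "k \<in> borel_measurable borel"
    and v_bound: "\<And>y. \<bar>v y\<bar> \<le> M"
    and v_linearization: "\<And>y. \<bar>v y - g y\<bar> \<le> B * (norm y)\<^sup>2"
    and g_odd: "\<And>y. g (- y) = - g y"
    and g_bound: "\<And>y. \<bar>g y\<bar> \<le> D * norm y"
    and k_nonneg: "\<And>y. 0 \<le> k y"
    and k_bound: "\<And>y. y \<noteq> 0 \<Longrightarrow> k y \<le> C * norm y powr - (DIM('a) + 2 * s)"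
    and k_asymmetry: "(\<integral>\<^sup>+y\<in>ball 0 1. ennreal (norm y * \<bar>k y - k (- y)\<bar>) \<partial>lborel) \<le> ennreal S"
    and S_nonneg: "0 \<le> S"
begin

declare measurable[measurable]

lemma fractional_kernel_constants_nonneg: "0 \<le> M" "0 \<le> B" "0 \<le> C" "0 \<le> D"
proof -
  obtain y0 :: 'a where y0: "norm y0 = 1"
    using vector_choose_size[of 1] by auto
  show "0 \<le> M" "0 \<le> B" "0 \<le> D"
    using v_bound[of y0] v_linearization[of y0] g_bound[of y0] y0
      abs_ge_zero[of "v y0"] abs_ge_zero[of "v y0 - g y0"] abs_ge_zero[of "g y0"] by simp_all
  have "y0 \<noteq> 0"
    using y0 by auto
  then show "0 \<le> C"
    using k_bound[of y0] k_nonneg[of y0] y0 by simp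
qed

lemma kernel_integrand_outside_ball:
  shows "\<And>\<epsilon>. 0 < \<epsilon> \<Longrightarrow> set_integrable lborel (- ball 0 \<epsilon>) (\<lambda>y. v y * k y)"
    and "\<bar>LINT y:- ball 0 1|lborel. v y * k y\<bar> \<le> 2 * unit_ball_vol DIM('a) * 2 ^ DIM('a) * M * C"
proof -
  define a where "a = DIM('a) + 2 * s"
  have a: "DIM('a) < a"
    using s by (simp add: a_def)
  have le: "\<bar>v y * k y\<bar> \<le> M * C * norm y powr - a" if "y \<in> - ball 0 \<epsilon>" "0 < \<epsilon>" for y \<epsilon>
  proof -
    have "y \<noteq> 0"
      using that by auto
    have "\<bar>v y * k y\<bar> = \<bar>v y\<bar> * k y"
      by (simp add: abs_mult k_nonneg)
    also have "\<dots> \<le> M * (C * norm y powr - a)"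
      using \<open>y \<noteq> 0\<close> v_bound k_bound[of y] k_nonneg[of y] fractional_kernel_constants_nonneg
      by (intro mult_mono) (auto simp: a_def)
    finally show ?thesis by simp
  qed
  have w: "set_integrable lborel (- ball (0::'a) \<epsilon>) (\<lambda>y. M * C * norm y powr - a)" if "0 < \<epsilon>" for \<epsilon>
    using set_integrable_norm_powr_outside_ball(1)[OF a that] by simp
  show "set_integrable lborel (- ball 0 \<epsilon>) (\<lambda>y. v y * k y)" if "0 < \<epsilon>" for \<epsilon>
    using le that by (intro set_integrable_abs_le(1)[OF w]) auto
  have "\<bar>LINT y:- ball 0 1|lborel. v y * k y\<bar> \<le> (LINT y:- ball (0::'a) 1|lborel. M * C * norm y powr - a)"
    using le by (intro set_integrable_abs_le(2)[OF w]) auto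
  also have "\<dots> = M * C * (LINT y:- ball (0::'a) 1|lborel. norm y powr - a)"
    by simp
  also have "\<dots> \<le> M * C * (unit_ball_vol DIM('a) * 2 ^ DIM('a) / (1 - 2 powr (- 2 * s)))"
    using set_integrable_norm_powr_outside_ball(2)[OF a, of 1] fractional_kernel_constants_nonneg
    by (intro mult_left_mono) (auto simp: a_def)
  also have "\<dots> \<le> M * C * (2 * unit_ball_vol DIM('a) * 2 ^ DIM('a))"
  proof -
    have "2 powr (- 2 * s) \<le> 2 powr (- 1)"
      using s by (intro powr_mono) auto
    then have "1 / 2 \<le> 1 - 2 powr (- 2 * s)"
      by (simp add: powr_minus_divide)
    then show ?thesis
      using fractional_kernel_constants_nonneg
      by (intro mult_left_mono) (auto simp: divide_simps)
  qed
  finally show "\<bar>LINT y:- ball 0 1|lborel. v y * k y\<bar> \<le> 2 * unit_ball_vol DIM('a) * 2 ^ DIM('a) * M * C"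
    by (simp add: mult_ac)
qed

lemma kernel_remainder_on_unit_ball:
  shows "set_integrable lborel (ball 0 1) (\<lambda>y. (v y - g y) * k y)"
    and "\<bar>LINT y:ball 0 1|lborel. (v y - g y) * k y\<bar> \<le> unit_ball_vol DIM('a) * 2 ^ DIM('a) / (1 - s) * B * C"
proof -
  define b where "b = DIM('a) + 2 * s - 2"
  have "1 \<le> real DIM('a)"
    using DIM_positive[where 'a='a] by (metis One_nat_def Suc_leI of_nat_1 of_nat_le_iff)
  then have b: "0 \<le> b" "b < DIM('a)"
    using s unfolding b_def by linarith+
  have le: "\<bar>(v y - g y) * k y\<bar> \<le> B * C * norm y powr - b" for y
  proof (cases "y = 0")
    case True
    then show ?thesis
      using v_linearization[of y] by simp
  next
    case False
    have "\<bar>(v y - g y) * k y\<bar> = \<bar>v y - g y\<bar> * k y"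
      by (simp add: abs_mult k_nonneg)
    also have "\<dots> \<le> (B * (norm y)\<^sup>2) * (C * norm y powr - (DIM('a) + 2 * s))"
      using False v_linearization[of y] k_bound[of y] k_nonneg[of y] abs_ge_zero[of "v y - g y"]
      by (intro mult_mono) auto
    also have "\<dots> = B * C * ((norm y)\<^sup>2 * norm y powr - (DIM('a) + 2 * s))"
      by (simp add: mult_ac)
    also have "(norm y)\<^sup>2 * norm y powr - (DIM('a) + 2 * s) = norm y powr - b"
    proof -
      have "(norm y)\<^sup>2 * norm y powr - (DIM('a) + 2 * s) = norm y powr (2 + - (DIM('a) + 2 * s))"
        unfolding powr_add using False by (simp add: powr_numeral)
      moreover have "2 + - (DIM('a) + 2 * s) = - b"
        by (simp add: b_def)
      ultimately show ?thesis
        by metis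
    qed
    finally show ?thesis .
  qed
  have w: "set_integrable lborel (ball (0::'a) 1) (\<lambda>y. B * C * norm y powr - b)"
    using set_integrable_norm_powr_ball(1)[OF b, of 1] by simp
  show "set_integrable lborel (ball 0 1) (\<lambda>y. (v y - g y) * k y)"
    using le by (intro set_integrable_abs_le(1)[OF w]) auto
  have "\<bar>LINT y:ball 0 1|lborel. (v y - g y) * k y\<bar> \<le> (LINT y:ball (0::'a) 1|lborel. B * C * norm y powr - b)"
    using le by (intro set_integrable_abs_le(2)[OF w]) auto
  also have "\<dots> = B * C * (LINT y:ball (0::'a) 1|lborel. norm y powr - b)"
    by simp
  also have "\<dots> \<le> B * C * (unit_ball_vol DIM('a) * 2 ^ DIM('a) / (2 powr (2 - 2 * s) - 1))"
    using set_integrable_norm_powr_ball(2)[OF b, of 1] fractional_kernel_constants_nonneg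
    by (intro mult_left_mono) (auto simp: b_def)
  also have "\<dots> \<le> B * C * (unit_ball_vol DIM('a) * 2 ^ DIM('a) / (1 - s))"
  proof -
    have "1 - s \<le> 2 powr (2 - 2 * s) - 1"
      using half_le_two_powr_minus_one[of "2 - 2 * s"] s by simp
    then show ?thesis
      using s fractional_kernel_constants_nonneg
      by (intro mult_left_mono divide_left_mono) auto
  qed
  finally show "\<bar>LINT y:ball 0 1|lborel. (v y - g y) * k y\<bar>
      \<le> unit_ball_vol DIM('a) * 2 ^ DIM('a) / (1 - s) * B * C"
    by (simp add: mult_ac)
qed

lemma kernel_odd_part_on_unit_ball:
  shows "set_integrable lborel (ball 0 1) (\<lambda>y. g y * (k y - k (- y)) / 2)"
    and "\<bar>LINT y:ball 0 1|lborel. g y * (k y - k (- y)) / 2\<bar> \<le> D / 2 * S"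
proof -
  have asym: "set_integrable lborel (ball (0::'a) 1) (\<lambda>y. norm y * \<bar>k y - k (- y)\<bar>)"
    "(LINT y:ball (0::'a) 1|lborel. norm y * \<bar>k y - k (- y)\<bar>) \<le> S"
    using set_integrable_nn_integral_le[OF _ _ _ k_asymmetry S_nonneg] by auto
  have w: "set_integrable lborel (ball (0::'a) 1) (\<lambda>y. D / 2 * (norm y * \<bar>k y - k (- y)\<bar>))"
    using asym(1) by simp
  have le: "\<bar>g y * (k y - k (- y)) / 2\<bar> \<le> D / 2 * (norm y * \<bar>k y - k (- y)\<bar>)" for y
    using mult_right_mono[OF g_bound[of y] abs_ge_zero[of "k y - k (- y)"]]
    by (simp add: abs_mult mult_ac)
  show "set_integrable lborel (ball 0 1) (\<lambda>y. g y * (k y - k (- y)) / 2)"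
    using le by (intro set_integrable_abs_le(1)[OF w]) auto
  have "\<bar>LINT y:ball 0 1|lborel. g y * (k y - k (- y)) / 2\<bar>
      \<le> (LINT y:ball (0::'a) 1|lborel. D / 2 * (norm y * \<bar>k y - k (- y)\<bar>))"
    using le by (intro set_integrable_abs_le(2)[OF w]) auto
  also have "\<dots> \<le> D / 2 * S"
    using asym(2) fractional_kernel_constants_nonneg by (simp add: mult_left_mono)
  finally show "\<bar>LINT y:ball 0 1|lborel. g y * (k y - k (- y)) / 2\<bar> \<le> D / 2 * S" .
qed

lemma kernel_integral_on_annulus:
  assumes "0 < \<epsilon>" "\<epsilon> < 1"
  shows "(LINT y:ball 0 1 - ball 0 \<epsilon>|lborel. v y * k y)
    = (LINT y:ball 0 1 - ball 0 \<epsilon>|lborel. (v y - g y) * k y + g y * (k y - k (- y)) / 2)"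
proof -
  let ?A = "ball (0::'a) 1 - ball 0 \<epsilon>"
  have vk: "set_integrable lborel ?A (\<lambda>y. v y * k y)"
    using assms by (intro set_integrable_subset[OF kernel_integrand_outside_ball(1)]) auto
  have rem: "set_integrable lborel ?A (\<lambda>y. (v y - g y) * k y)"
    by (intro set_integrable_subset[OF kernel_remainder_on_unit_ball(1)]) auto
  have odd: "set_integrable lborel ?A (\<lambda>y. g y * (k y - k (- y)) / 2)"
    by (intro set_integrable_subset[OF kernel_odd_part_on_unit_ball(1)]) auto
  have gk: "set_integrable lborel ?A (\<lambda>y. g y * k y)"
    using set_integral_diff(1)[OF vk rem] by (simp add: algebra_simps)
  have "(LINT y:?A|lborel. v y * k y) = (LINT y:?A|lborel. (v y - g y) * k y + g y * k y)"
    by (simp add: algebra_simps)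
  also have "\<dots> = (LINT y:?A|lborel. (v y - g y) * k y) + (LINT y:?A|lborel. g y * k y)"
    using rem gk by simp
  also have "(LINT y:?A|lborel. g y * k y) = (LINT y:?A|lborel. g y * (k y - k (- y)) / 2)"
    using gk g_odd by (intro set_integral_odd_mult) auto
  also have "(LINT y:?A|lborel. (v y - g y) * k y) + \<dots>
      = (LINT y:?A|lborel. (v y - g y) * k y + g y * (k y - k (- y)) / 2)"
    using rem odd by simp
  finally show ?thesis .
qed

theorem kernel_principal_value:
  "\<exists>L. ((\<lambda>\<epsilon>. LINT y:- ball 0 \<epsilon>|lborel. v y * k y) \<longlongrightarrow> L) (at_right 0) \<and>
    \<bar>L\<bar> \<le> 2 * unit_ball_vol DIM('a) * 2 ^ DIM('a) * M * C
      + unit_ball_vol DIM('a) * 2 ^ DIM('a) / (1 - s) * B * C + D / 2 * S"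
proof (intro exI conjI)
  let ?h = "\<lambda>y. (v y - g y) * k y" and ?q = "\<lambda>y. g y * (k y - k (- y)) / 2"
  show "((\<lambda>\<epsilon>. LINT y:- ball 0 \<epsilon>|lborel. v y * k y)
      \<longlongrightarrow> (LINT y:- ball 0 1|lborel. v y * k y) + (LINT y:ball 0 1|lborel. ?h y + ?q y)) (at_right 0)"
    using kernel_integrand_outside_ball(1) kernel_remainder_on_unit_ball(1)
      kernel_odd_part_on_unit_ball(1) kernel_integral_on_annulus
    by (intro tendsto_set_integral_outside_ball) auto
  have "(LINT y:ball 0 1|lborel. ?h y + ?q y) = (LINT y:ball 0 1|lborel. ?h y) + (LINT y:ball 0 1|lborel. ?q y)"
    using kernel_remainder_on_unit_ball(1) kernel_odd_part_on_unit_ball(1) by simp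
  then show "\<bar>(LINT y:- ball 0 1|lborel. v y * k y) + (LINT y:ball 0 1|lborel. ?h y + ?q y)\<bar>
      \<le> 2 * unit_ball_vol DIM('a) * 2 ^ DIM('a) * M * C
        + unit_ball_vol DIM('a) * 2 ^ DIM('a) / (1 - s) * B * C + D / 2 * S"
    using kernel_integrand_outside_ball(2) kernel_remainder_on_unit_ball(2)
      kernel_odd_part_on_unit_ball(2) by linarith
qed

end

section \<open>The operator estimate\<close>

lemma enn2real_le_divide:
  assumes "e \<le> ennreal C / ennreal r" "0 \<le> C" "0 < r"
  shows "enn2real e \<le> C / r"
  using assms by (intro enn2real_leI) (simp_all add: divide_ennreal)

lemma fractional_estimate_arith:
  fixes V N M0 D1 D2 C Cs s :: real
  assumes s: "1/2 \<le> s" "s < 1" and nonneg: "0 \<le> V" "0 \<le> M0" "0 \<le> D1" "0 \<le> D2" "0 \<le> C" "0 \<le> Cs"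
  shows "2 * V * (2 * M0) * C + V / (1 - s) * (N\<^sup>2 * D2) * C + D1 / 2 * Cs
    \<le> (V * (N\<^sup>2 + 4) + 1) * (M0 + D1 + D2) * (C / (s * (1 - s)) + Cs)"
proof -
  define Q where "Q = C / (s * (1 - s))"
  define Cn where "Cn = V * (N\<^sup>2 + 4) + 1"
  have "C / (1 - s) \<le> Q"
    using s nonneg by (auto simp: Q_def intro!: divide_left_mono mult_le_one)
  moreover have "C \<le> C / (1 - s)"
    using s nonneg by (simp add: le_divide_eq mult_left_le)
  ultimately have CQ: "C \<le> Q" "C / (1 - s) \<le> Q"
    by linarith+
  have Cn: "4 * V \<le> Cn" "V * N\<^sup>2 \<le> Cn" "1 / 2 \<le> Cn"
    using nonneg by (auto simp: Cn_def algebra_simps)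
  have "4 * V * M0 * C \<le> Cn * M0 * Q"
    using Cn CQ nonneg by (intro mult_mono) auto
  moreover have "V * N\<^sup>2 * D2 * (C / (1 - s)) \<le> Cn * D2 * Q"
    using Cn CQ nonneg s by (intro mult_mono) auto
  moreover have "1 / 2 * D1 * Cs \<le> Cn * D1 * Cs"
    using Cn nonneg by (intro mult_mono) auto
  moreover have "0 \<le> Cn * (M0 * Cs + D1 * Q + D2 * Cs)"
    using s nonneg by (simp add: Cn_def Q_def)
  ultimately show ?thesis
    unfolding Cn_def[symmetric] Q_def[symmetric] by (simp add: algebra_simps)
qed

definition kernel_section :: "(real^'n::finite \<Rightarrow> real^'n \<Rightarrow> ennreal) \<Rightarrow> real^'n \<Rightarrow> real^'n \<Rightarrow> real" where
  "kernel_section K x y = enn2real (K x (x - y))"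

lemma kernel_section_properties:
  fixes K :: "real^'n::finite \<Rightarrow> real^'n \<Rightarrow> ennreal" and s C :: real
  assumes C: "0 < C" and K_meas: "(\<lambda>p. K (fst p) (snd p)) \<in> borel_measurable borel"
    and K_le: "\<And>x z. x \<noteq> z \<Longrightarrow> K x z \<le> ennreal C / ennreal (norm (x - z) powr (real CARD('n) + 2 * s))"
    and C_sharp: "C_sharp K < \<infinity>"
  shows "kernel_section K x \<in> borel_measurable borel"
    and "\<And>y. 0 \<le> kernel_section K x y"
    and "\<And>y. y \<noteq> 0 \<Longrightarrow> kernel_section K x y \<le> C * norm y powr - (DIM(real^'n) + 2 * s)"
    and "(\<integral>\<^sup>+y\<in>ball 0 1. ennreal (norm y * \<bar>kernel_section K x y - kernel_section K x (- y)\<bar>) \<partial>lborel)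
      \<le> ennreal (enn2real (C_sharp K))"
proof -
  have "(\<lambda>y. (x, x - y)) \<in> borel_measurable borel"
    by (intro borel_measurable_continuous_onI continuous_intros)
  from measurable_compose[OF this K_meas] show "kernel_section K x \<in> borel_measurable borel"
    unfolding kernel_section_def[abs_def] by (simp add: borel_measurable_enn2real)
  show "0 \<le> kernel_section K x y" for y
    by (simp add: kernel_section_def)
  show "kernel_section K x y \<le> C * norm y powr - (DIM(real^'n) + 2 * s)" if "y \<noteq> 0" for y
  proof -
    have "kernel_section K x y \<le> C / norm y powr (DIM(real^'n) + 2 * s)"
      using enn2real_le_divide[OF K_le[of x "x - y"]] C that by (simp add: kernel_section_def)
    then show ?thesis
      by (simp only: powr_minus divide_inverse)
  qed
  have "(\<integral>\<^sup>+y\<in>ball 0 1. ennreal (norm y * \<bar>kernel_section K x y - kernel_section K x (- y)\<bar>) \<partial>lborel)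
      \<le> C_sharp K"
    unfolding C_sharp_def kernel_section_def by (rule SUP_upper2[of x]) (auto simp: abs_minus_commute)
  then show "(\<integral>\<^sup>+y\<in>ball 0 1. ennreal (norm y * \<bar>kernel_section K x y - kernel_section K x (- y)\<bar>) \<partial>lborel)
      \<le> ennreal (enn2real (C_sharp K))"
    using C_sharp by simp
qed

definition operator_bound_constant :: "nat \<Rightarrow> real" where
  "operator_bound_constant n = unit_ball_vol (real n) * 2 ^ n * ((real n)\<^sup>2 + 4) + 1"

lemma operator_bound_constant_pos: "0 < operator_bound_constant n"
  by (simp add: operator_bound_constant_def add_nonneg_pos)

lemma trunc_op_principal_value:
  fixes K :: "real^'n::finite \<Rightarrow> real^'n \<Rightarrow> ennreal" and u :: "real^'n \<Rightarrow> real"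
    and x :: "real^'n" and s C :: real
  assumes s: "1/2 \<le> s" "s < 1" and C: "0 < C"
    and K_meas: "(\<lambda>p. K (fst p) (snd p)) \<in> borel_measurable borel"
    and K_le: "\<And>x z. x \<noteq> z \<Longrightarrow> K x z \<le> ennreal C / ennreal (norm (x - z) powr (real CARD('n) + 2 * s))"
    and C_sharp: "C_sharp K < \<infinity>"
    and u: "smooth_compact_support u"
  shows "(\<forall>\<epsilon>>0. set_integrable lborel (- ball 0 \<epsilon>) (\<lambda>y. (u x - u (x - y)) * enn2real (K x (x - y))))
    \<and> (\<exists>L. (trunc_op K u x \<longlongrightarrow> L) (at_right 0))
    \<and> \<bar>Lim (at_right 0) (trunc_op K u x)\<bar>
        \<le> operator_bound_constant CARD('n) * C2_norm u * (C / (s * (1 - s)) + enn2real (C_sharp K))"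
proof -
  obtain M0 D1 D2 where C2: "C2_norm u = M0 + D1 + D2" "0 \<le> M0" "0 \<le> D1" "0 \<le> D2"
    and u_bound: "\<And>z. \<bar>u z\<bar> \<le> M0"
    and grad_bound: "\<And>x y. \<bar>\<Sum>j\<in>UNIV. partial_deriv j u x * y $ j\<bar> \<le> D1 * norm y"
    and linearization: "\<And>x y. \<bar>u x - u (x - y) - (\<Sum>j\<in>UNIV. partial_deriv j u x * y $ j)\<bar>
      \<le> (real CARD('n))\<^sup>2 * D2 * (norm y)\<^sup>2"
    using smooth_compact_support_C2_bounds[OF u] by blast
  have "continuous_on UNIV u"
    using u by (auto simp: smooth_compact_support_def smooth_def dest: spec[of _ "[]"])
  then have [measurable]: "u \<in> borel_measurable borel"
    by (rule borel_measurable_continuous_onI)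
  have increment_meas: "(\<lambda>y. u x - u (x - y)) \<in> borel_measurable borel"
    by measurable
  have gradient_meas: "(\<lambda>y. \<Sum>j\<in>UNIV. partial_deriv j u x * y $ j) \<in> borel_measurable borel"
    by (intro borel_measurable_continuous_onI continuous_intros)
  have increment_bound: "\<bar>u x - u (x - y)\<bar> \<le> 2 * M0" for y
    using u_bound[of x] u_bound[of "x - y"] by simp
  have gradient_odd: "(\<Sum>j\<in>UNIV. partial_deriv j u x * (- y) $ j) = - (\<Sum>j\<in>UNIV. partial_deriv j u x * y $ j)" for y
    by (simp add: sum_negf)
  note kernel_facts = s increment_meas gradient_meas kernel_section_properties(1)[OF C K_meas K_le C_sharp]
    increment_bound linearization[of x] gradient_odd grad_bound[of x]
    kernel_section_properties(2-4)[OF C K_meas K_le C_sharp] enn2real_nonneg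
  obtain L where L: "((\<lambda>\<epsilon>. LINT y:- ball 0 \<epsilon>|lborel. (u x - u (x - y)) * kernel_section K x y) \<longlongrightarrow> L) (at_right 0)"
    "\<bar>L\<bar> \<le> 2 * unit_ball_vol CARD('n) * 2 ^ CARD('n) * (2 * M0) * C
      + unit_ball_vol CARD('n) * 2 ^ CARD('n) / (1 - s) * ((real CARD('n))\<^sup>2 * D2) * C + D1 / 2 * enn2real (C_sharp K)"
    using kernel_principal_value[OF kernel_facts] by auto
  have trunc_op: "trunc_op K u x = (\<lambda>\<epsilon>. LINT y:- ball 0 \<epsilon>|lborel. (u x - u (x - y)) * kernel_section K x y)"
    by (simp add: fun_eq_iff trunc_op_def kernel_section_def)
  have "\<bar>L\<bar> \<le> operator_bound_constant CARD('n) * C2_norm u * (C / (s * (1 - s)) + enn2real (C_sharp K))"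
    using L(2) fractional_estimate_arith[OF s _ C2(2-4), of "unit_ball_vol CARD('n) * 2 ^ CARD('n)" C
        "enn2real (C_sharp K)" "real CARD('n)"] C
    unfolding operator_bound_constant_def C2(1) by (simp only: mult.assoc) simp
  then show ?thesis
    using kernel_integrand_outside_ball(1)[OF kernel_facts] L(1) tendsto_Lim[OF _ L(1)]
    by (auto simp: trunc_op kernel_section_def)
qed

theorem lemmaA2:
  shows "\<exists>Cn>0. \<forall>(s::real) (K :: real^'n::finite \<Rightarrow> real^'n \<Rightarrow> ennreal) (c::real) (C::real)
      (\<rho>::ennreal) (u :: real^'n \<Rightarrow> real).
    1/2 \<le> s \<and> s < 1 \<and> 0 < c \<and> 0 < C \<and> 0 < \<rho> \<and>
    (\<lambda>p. K (fst p) (snd p)) \<in> borel_measurable borel \<and>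
    (\<forall>x z. x \<noteq> z \<longrightarrow>
       ennreal c * (if ennreal (norm (x - z)) < \<rho> then 1 else 0)
          / ennreal (norm (x - z) powr (real CARD('n) + 2 * s)) \<le> K x z \<and>
       K x z \<le> ennreal C / ennreal (norm (x - z) powr (real CARD('n) + 2 * s))) \<and>
    C_sharp K < \<infinity> \<and>
    smooth_compact_support u
    \<longrightarrow>
    (\<forall>x. (\<forall>\<epsilon>>0. set_integrable lborel (- ball 0 \<epsilon>)
              (\<lambda>y. (u x - u (x - y)) * enn2real (K x (x - y)))) \<and>
         (\<exists>L. (trunc_op K u x \<longlongrightarrow> L) (at_right 0)) \<and>
         \<bar>Lim (at_right 0) (trunc_op K u x)\<bar>
           \<le> Cn * C2_norm u * (C / (s * (1 - s)) + enn2real (C_sharp K)))"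
proof (rule exI[of _ "operator_bound_constant CARD('n)"], rule conjI[OF operator_bound_constant_pos],
    intro allI impI, goal_cases)
  case (1 s K c C \<rho> u x)
  then have K_le: "K y z \<le> ennreal C / ennreal (norm (y - z) powr (real CARD('n) + 2 * s))"
    if "y \<noteq> z" for y z
    using that by blast
  show ?case
    by (rule trunc_op_principal_value) (use 1 K_le in auto)
qed

end
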